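(* Let $\mathbb{X}$ be a two-dimensional real Banach space, let $x\in S_{\mathbb{X}}$, $\epsilon\in[0,1)$, and let $y\in S_{\mathbb{X}}$ be such that $x\perp_B y$. Let $t_1=\inf\{t\in[0,1] : x\perp_D^{\epsilon}((1-t)x+ty)\}$ and $t_2=\inf\{t\in[0,1] : x\perp_D^{\epsilon}(-(1-t)x+ty)\}$, put $u_1=(1-t_1)x+t_1y$, $u_2=-(1-t_2)x+t_2y$, $v_1=u_1/\|u_1\|$, $v_2=u_2/\|u_2\|$. Let $S(x,\epsilon)=\{z\in S_{\mathbb{X}} : \inf_{\lambda\in\mathbb{R}}\|x+\lambda z\|=\sqrt{1-\epsilon^2}\}$. Then $S(x,\epsilon)=\{\pm v_1,\pm v_2\}$ if $\epsilon\in(0,1)$, and $S(x,\epsilon)=\{y'\in S_{\mathbb{X}} : x\perp_B y'\}$ if $\epsilon=0$.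
   Context: $S_{\mathbb{X}}$ is the unit sphere of $\mathbb{X}$. For $x,y\in\mathbb{X}$, $x\perp_B y$ (Birkhoff-James orthogonality) means $\|x+\lambda y\|\geq\|x\|$ for all $\lambda\in\mathbb{R}$. For $\epsilon\in[0,1)$, $x\perp_D^{\epsilon} y$ means $\|x+\lambda y\|\geq\sqrt{1-\epsilon^2}\,\|x\|$ for all $\lambda\in\mathbb{R}$. *)

theory Defs
  imports "HOL-Analysis.Analysis"
begin

definition bj_orth :: "'a::real_normed_vector \<Rightarrow> 'a \<Rightarrow> bool" where
  "bj_orth x y \<longleftrightarrow> (\<forall>l::real. norm (x + l *\<^sub>R y) \<ge> norm x)"

definition dorth :: "real \<Rightarrow> 'a::real_normed_vector \<Rightarrow> 'a \<Rightarrow> bool" where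
  "dorth \<epsilon> x y \<longleftrightarrow> (\<forall>l::real. norm (x + l *\<^sub>R y) \<ge> sqrt (1 - \<epsilon>\<^sup>2) * norm x)"

definition S_set :: "'a::real_normed_vector \<Rightarrow> real \<Rightarrow> 'a set" where
  "S_set x \<epsilon> = {z. norm z = 1 \<and> (INF l::real. norm (x + l *\<^sub>R z)) = sqrt (1 - \<epsilon>\<^sup>2)}"

end

theory Submission
  imports Defs
begin

text \<open>
  For a unit vector x let D(w) = inf_l norm (x + l w) be the distance from x to the line
  spanned by w; then S(x, eps) is the level set D = sqrt(1 - eps^2) on the unit sphere, and
  x is eps-orthogonal to w iff D(w) >= sqrt(1 - eps^2). Along the segment
  w(t) = (1 - t) x + t y we have D(w(0)) = 0 and, since x is Birkhoff-James orthogonal to y,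
  D(w(1)) = 1. The function t \<mapsto> D(w(t)) is Lipschitz and non-decreasing, and strictly
  increasing while below 1: shrinking a nearly closest point x - m w(t) of the line towards
  the origin lands on the line through an earlier point w(r). Hence each level
  c in (0, 1) is attained at exactly one parameter, which is the infimum t1 of the
  superlevel set. In dimension two every unit vector is, up to sign, a positive multiple of
  a point of one of the segments [x, y] and [-x, y]; as D is invariant under rescaling,
  the level set on the sphere is {v1, -v1, v2, -v2}. For eps = 0 the level D = 1 = norm x
  is exactly Birkhoff-James orthogonality.
\<close>

definition line_dist :: "'a::real_normed_vector \<Rightarrow> 'a \<Rightarrow> real" where
  "line_dist x w = (INF l::real. norm (x + l *\<^sub>R w))"

lemma line_dist_le: "line_dist x w \<le> norm (x + l *\<^sub>R w)"
  unfolding line_dist_def by (rule cINF_lower) (auto intro: bdd_belowI[of _ 0])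

lemma line_dist_greatest: "(\<And>l. a \<le> norm (x + l *\<^sub>R w)) \<Longrightarrow> a \<le> line_dist x w"
  unfolding line_dist_def by (rule cINF_greatest) auto

lemma line_dist_nonneg: "0 \<le> line_dist x w"
  by (rule line_dist_greatest) simp

lemma line_dist_le_norm: "line_dist x w \<le> norm x"
  using line_dist_le[of x w 0] by simp

lemma line_dist_self: "line_dist x x = 0"
  using line_dist_le[of x x "-1"] line_dist_nonneg[of x x] by simp

lemma line_dist_scaleR:
  assumes "k \<noteq> 0"
  shows "line_dist x (k *\<^sub>R w) = line_dist x w"
proof (rule antisym)
  show "line_dist x (k *\<^sub>R w) \<le> line_dist x w"
  proof (rule line_dist_greatest)
    fix l show "line_dist x (k *\<^sub>R w) \<le> norm (x + l *\<^sub>R w)"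
      using line_dist_le[of x "k *\<^sub>R w" "l / k"] assms by simp
  qed
  show "line_dist x w \<le> line_dist x (k *\<^sub>R w)"
  proof (rule line_dist_greatest)
    fix l show "line_dist x w \<le> norm (x + l *\<^sub>R k *\<^sub>R w)"
      using line_dist_le[of x w "l * k"] by simp
  qed
qed

lemma line_dist_uminus_right: "line_dist x (- w) = line_dist x w"
  using line_dist_scaleR[of "-1" x w] by simp

lemma line_dist_uminus_left: "line_dist (- x) w = line_dist x w"
proof -
  have "norm (- x + l *\<^sub>R w) = norm (x + (- l) *\<^sub>R w)" for l
    by (metis norm_minus_commute diff_conv_add_uminus scaleR_minus_left add.commute)
  then show ?thesis
    by (metis (no_types) antisym line_dist_greatest line_dist_le minus_minus)
qed

lemma bj_orth_iff_line_dist: "bj_orth x z \<longleftrightarrow> line_dist x z = norm x"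
  unfolding bj_orth_def
  by (metis antisym line_dist_greatest line_dist_le line_dist_le_norm)

lemma dorth_iff_line_dist: "dorth e x w \<longleftrightarrow> sqrt (1 - e\<^sup>2) * norm x \<le> line_dist x w"
  unfolding dorth_def by (meson line_dist_greatest line_dist_le order_trans)

lemma bj_orth_abs_coeff_le:
  assumes "bj_orth x y"
  shows "\<bar>a\<bar> * norm x \<le> norm (a *\<^sub>R x + b *\<^sub>R y)"
proof (cases "a = 0")
  case False
  have "a *\<^sub>R x + b *\<^sub>R y = a *\<^sub>R (x + (b / a) *\<^sub>R y)"
    using False by (simp add: algebra_simps)
  moreover have "norm x \<le> norm (x + (b / a) *\<^sub>R y)"
    using assms unfolding bj_orth_def by blast
  ultimately show ?thesis by (simp add: mult_left_mono)
qed simp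

lemma line_dist_le_perturbation:
  assumes "w' \<noteq> 0"
  shows "line_dist x w \<le> line_dist x w' + 2 * norm x * norm (w - w') / norm w'"
proof -
  have "line_dist x w - 2 * norm x * norm (w - w') / norm w' \<le> line_dist x w'"
  proof (rule line_dist_greatest)
    fix l
    show "line_dist x w - 2 * norm x * norm (w - w') / norm w' \<le> norm (x + l *\<^sub>R w')"
    proof (cases "norm x \<le> norm (x + l *\<^sub>R w')")
      case True
      moreover have "0 \<le> 2 * norm x * norm (w - w') / norm w'" by simp
      ultimately show ?thesis using line_dist_le_norm[of x w] by linarith
    next
      case False
      have "\<bar>l\<bar> * norm w' \<le> norm (x + l *\<^sub>R w') + norm x"
        using norm_triangle_ineq4[of "x + l *\<^sub>R w'" x] by simp
      then have "\<bar>l\<bar> \<le> 2 * norm x / norm w'"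
        using False assms by (simp add: field_simps)
      then have l: "\<bar>l\<bar> * norm (w - w') \<le> 2 * norm x * norm (w - w') / norm w'"
        using mult_right_mono[of _ _ "norm (w - w')"] by fastforce
      have "x + l *\<^sub>R w = (x + l *\<^sub>R w') + l *\<^sub>R (w - w')"
        by (simp add: algebra_simps)
      then have "norm (x + l *\<^sub>R w) \<le> norm (x + l *\<^sub>R w') + \<bar>l\<bar> * norm (w - w')"
        by (metis norm_scaleR norm_triangle_ineq)
      then show ?thesis using l line_dist_le[of x w l] by linarith
    qed
  qed
  then show ?thesis by simp
qed

locale bj_unit_pair =
  fixes x y :: "'a::real_normed_vector"
  assumes norm_x: "norm x = 1" and norm_y: "norm y = 1" and orth: "bj_orth x y"
begin

lemma bj_unit_pair_uminus: "bj_unit_pair (- x) y"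
  using norm_x norm_y orth
  by unfold_locales (simp_all add: bj_orth_iff_line_dist line_dist_uminus_left)

lemma abs_coeff_le: "\<bar>a\<bar> \<le> norm (a *\<^sub>R x + b *\<^sub>R y)"
  using bj_orth_abs_coeff_le[OF orth] norm_x by simp

lemma norm_linepath_le: "t \<in> {0..1} \<Longrightarrow> norm (linepath x y t) \<le> 1"
  using norm_triangle_ineq[of "(1 - t) *\<^sub>R x" "t *\<^sub>R y"] norm_x norm_y
  by (simp add: linepath_def)

lemma norm_linepath_ge: "t \<in> {0..1} \<Longrightarrow> 1/3 \<le> norm (linepath x y t)"
proof -
  assume t: "t \<in> {0..1}"
  have "\<bar>1 - t\<bar> \<le> norm (linepath x y t)"
    unfolding linepath_def by (rule abs_coeff_le)
  moreover have "norm (t *\<^sub>R y) \<le> norm (linepath x y t) + norm ((1 - t) *\<^sub>R x)"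
    using norm_triangle_ineq4[of "linepath x y t" "(1 - t) *\<^sub>R x"] by (simp add: linepath_def)
  ultimately show ?thesis using t norm_x norm_y by auto
qed

lemma line_dist_linepath_0: "line_dist x (linepath x y 0) = 0"
  by (simp add: linepath_def line_dist_self)

lemma line_dist_linepath_1: "line_dist x (linepath x y 1) = 1"
  using orth norm_x by (simp add: linepath_def bj_orth_iff_line_dist)

lemma one_le_norm_add_linepath:
  assumes "0 \<le> l" "t \<le> 1"
  shows "1 \<le> norm (x + l *\<^sub>R linepath x y t)"
proof -
  have "x + l *\<^sub>R linepath x y t = (1 + l * (1 - t)) *\<^sub>R x + (l * t) *\<^sub>R y"
    by (simp add: linepath_def algebra_simps)
  then have "\<bar>1 + l * (1 - t)\<bar> \<le> norm (x + l *\<^sub>R linepath x y t)"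
    by (metis abs_coeff_le)
  moreover have "0 \<le> l * (1 - t)" using assms by simp
  ultimately show ?thesis by linarith
qed

lemma lipschitz_line_dist_linepath:
  "12-lipschitz_on {0..1} (\<lambda>t. line_dist x (linepath x y t))"
proof -
  have bound: "line_dist x (linepath x y s) \<le> line_dist x (linepath x y t) + 12 * dist s t"
    if s: "s \<in> {0..1}" and t: "t \<in> {0..1}" for s t
  proof -
    have "linepath x y s - linepath x y t = (s - t) *\<^sub>R (y - x)"
      by (simp add: linepath_def algebra_simps)
    then have "norm (linepath x y s - linepath x y t) = dist s t * norm (y - x)"
      by (simp add: dist_real_def)
    also have "\<dots> \<le> dist s t * 2"
      using norm_triangle_ineq4[of y x] norm_x norm_y by (intro mult_left_mono) simp_all
    finally have "norm (linepath x y s - linepath x y t) \<le> dist s t * 2" .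
    moreover have W: "1/3 \<le> norm (linepath x y t)" using norm_linepath_ge[OF t] .
    moreover have "4 * dist s t \<le> 12 * dist s t * norm (linepath x y t)"
      using mult_left_mono[OF W, of "12 * dist s t"] by simp
    ultimately have "2 * norm (linepath x y s - linepath x y t) / norm (linepath x y t) \<le> 12 * dist s t"
      by (simp add: divide_le_eq)
    moreover have "linepath x y t \<noteq> 0" using W by auto
    ultimately show ?thesis
      using line_dist_le_perturbation[of "linepath x y t" x "linepath x y s"] norm_x by simp
  qed
  show ?thesis
  proof (rule lipschitz_onI)
    fix s t :: real assume "s \<in> {0..1}" "t \<in> {0..1}"
    then show "dist (line_dist x (linepath x y s)) (line_dist x (linepath x y t)) \<le> 12 * dist s t"
      using bound[of s t] bound[of t s] by (simp add: dist_real_def abs_le_iff abs_minus_commute)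
  qed simp
qed

lemma continuous_on_line_dist_linepath:
  "continuous_on {0..1} (\<lambda>t. line_dist x (linepath x y t))"
  by (rule lipschitz_on_continuous_on[OF lipschitz_line_dist_linepath])

text \<open>Scaling x - m w(t) by \<theta> towards the origin gives x - k w(r) with r \<le> t.\<close>

lemma line_dist_linepath_shrink:
  assumes "0 \<le> \<theta>" "\<theta> \<le> 1" "0 < m"
  shows "line_dist x (linepath x y (\<theta> * m * t / (1 - \<theta> + \<theta> * m)))
    \<le> \<theta> * norm (x - m *\<^sub>R linepath x y t)"
proof -
  define k where "k = 1 - \<theta> + \<theta> * m"
  have "0 < k"
    using assms by (cases "\<theta> = 0") (auto simp: k_def intro: add_nonneg_pos)
  define r where "r = \<theta> * m * t / k"
  have "k *\<^sub>R linepath x y r = (k * (1 - r)) *\<^sub>R x + (k * r) *\<^sub>R y"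
    by (simp add: linepath_def scaleR_add_right)
  also have "\<dots> = (k - \<theta> * m * t) *\<^sub>R x + (\<theta> * m * t) *\<^sub>R y"
    using \<open>0 < k\<close> by (simp add: r_def right_diff_distrib)
  finally have "x - k *\<^sub>R linepath x y r = \<theta> *\<^sub>R (x - m *\<^sub>R linepath x y t)"
    by (simp add: linepath_def k_def algebra_simps)
  then have "line_dist x (linepath x y r) \<le> \<theta> * norm (x - m *\<^sub>R linepath x y t)"
    using line_dist_le[of x "linepath x y r" "- k"] assms by simp
  then show ?thesis by (simp add: k_def r_def)
qed

lemma line_dist_linepath_mono:
  assumes "0 \<le> s" "s \<le> t" "t \<le> 1"
  shows "line_dist x (linepath x y s) \<le> line_dist x (linepath x y t)"
proof (cases "s = 0")
  case True
  then show ?thesis using line_dist_linepath_0 line_dist_nonneg by simp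
next
  case False
  with assms have "0 < s" by simp
  show ?thesis
  proof (rule line_dist_greatest)
    fix l
    show "line_dist x (linepath x y s) \<le> norm (x + l *\<^sub>R linepath x y t)"
    proof (cases "0 \<le> l")
      case True
      then show ?thesis
        using one_le_norm_add_linepath[of l t] assms line_dist_le_norm[of x "linepath x y s"] norm_x
        by linarith
    next
      case False
      define m where "m = - l"
      define D where "D = s + m * (t - s)"
      define \<theta> where "\<theta> = s / D"
      have "0 < m" using False by (simp add: m_def)
      moreover have "0 \<le> m * (t - s)" using \<open>0 < m\<close> assms by simp
      ultimately have "0 < D" and \<theta>: "0 < \<theta>" "\<theta> \<le> 1"
        using \<open>0 < s\<close> by (auto simp: \<theta>_def D_def)
      have "1 - \<theta> + \<theta> * m = (D - s + s * m) / D"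
        using \<open>0 < D\<close> by (simp add: \<theta>_def field_simps)
      also have "\<dots> = m * t / D"
        by (simp add: D_def algebra_simps)
      finally have "\<theta> * m * t / (1 - \<theta> + \<theta> * m) = s"
        using \<open>0 < D\<close> \<open>0 < s\<close> \<open>0 < m\<close> assms by (simp add: \<theta>_def)
      then have "line_dist x (linepath x y s) \<le> \<theta> * norm (x - m *\<^sub>R linepath x y t)"
        using line_dist_linepath_shrink[of \<theta> m t] \<theta> \<open>0 < m\<close> by simp
      also have "\<dots> \<le> norm (x + l *\<^sub>R linepath x y t)"
        using \<theta> by (simp add: m_def mult_left_le_one_le)
      finally show ?thesis .
    qed
  qed
qed

lemma shrink_near_point_to_earlier_line:
  assumes "0 \<le> s" "s \<le> t" "t \<le> 1" "0 < c" "0 < d" "0 < m"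
    and near: "norm (x - m *\<^sub>R linepath x y t) < c + d"
    and small: "d \<le> c * m * (t - s)"
  obtains r where "s \<le> r" "r \<le> t" "line_dist x (linepath x y r) < c"
proof -
  define \<theta> where "\<theta> = c / (c + d)"
  define k where "k = 1 - \<theta> + \<theta> * m"
  define r where "r = \<theta> * m * t / k"
  have \<theta>: "0 < \<theta>" "\<theta> < 1" "1 - \<theta> = d / (c + d)"
    using assms by (auto simp: \<theta>_def field_simps)
  have "0 < k" using \<theta> \<open>0 < m\<close> by (simp add: k_def add_pos_nonneg)
  have "line_dist x (linepath x y r) \<le> \<theta> * norm (x - m *\<^sub>R linepath x y t)"
    using line_dist_linepath_shrink[of \<theta> m t] \<theta> \<open>0 < m\<close> by (simp add: r_def k_def)
  also have "\<dots> < \<theta> * (c + d)" using near \<theta> by simp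
  also have "\<dots> = c" using assms by (simp add: \<theta>_def)
  finally have "line_dist x (linepath x y r) < c" .
  moreover have "\<theta> * m * t \<le> k * t"
    using \<theta> assms by (intro mult_right_mono) (simp_all add: k_def)
  then have "r \<le> t" using \<open>0 < k\<close> by (simp add: r_def divide_le_eq mult.commute)
  moreover have "s * (1 - \<theta>) \<le> \<theta> * m * (t - s)"
  proof -
    have "d / (c + d) \<le> \<theta> * m * (t - s)"
      using small assms by (simp add: \<theta>_def divide_right_mono)
    moreover have "s * (d / (c + d)) \<le> d / (c + d)"
      using assms by (intro mult_left_le_one_le) simp_all
    ultimately show ?thesis using \<theta> by simp
  qed
  then have "s \<le> r"
    using \<open>0 < k\<close> by (simp add: r_def k_def le_divide_eq algebra_simps)
  ultimately show ?thesis using that by blast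
qed

lemma line_dist_linepath_strict_mono:
  assumes "0 \<le> s" "s < t" "t \<le> 1"
    and "0 < line_dist x (linepath x y t)" "line_dist x (linepath x y t) < 1"
  shows "line_dist x (linepath x y s) < line_dist x (linepath x y t)"
proof -
  define c where "c = line_dist x (linepath x y t)"
  \<comment> \<open>small enough that shrinking a (c + d)-near point of the line by c / (c + d)
      lands on a line through a parameter r \<ge> s\<close>
  define d where "d = c * (1 - c) * (t - s) / 2"
  have c: "0 < c" "c < 1" using assms by (simp_all add: c_def)
  have "0 < d" using c assms by (simp add: d_def)
  have "c * (t - s) \<le> 1" using c assms by (simp add: mult_le_one)
  then have "(1 - c) * (c * (t - s)) \<le> 1 - c"
    using c by (simp add: mult_left_le)
  moreover have "d = (1 - c) * (c * (t - s)) / 2" by (simp add: d_def mult_ac)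
  ultimately have "d \<le> (1 - c) / 2" by simp
  have "\<not> c + d \<le> line_dist x (linepath x y t)" using \<open>0 < d\<close> by (simp add: c_def)
  then obtain l where l: "norm (x + l *\<^sub>R linepath x y t) < c + d"
    by (meson line_dist_greatest not_le)
  have "l < 0"
    using one_le_norm_add_linepath[of l t] l \<open>d \<le> (1 - c) / 2\<close> c assms by fastforce
  define m where "m = - l"
  have near: "norm (x - m *\<^sub>R linepath x y t) < c + d" using l by (simp add: m_def)
  have "0 < m" using \<open>l < 0\<close> by (simp add: m_def)
  have "(1 - c) / 2 \<le> m"
  proof -
    have "norm x \<le> norm (m *\<^sub>R linepath x y t) + norm (x - m *\<^sub>R linepath x y t)"
      by (rule norm_triangle_sub)
    moreover have "norm (m *\<^sub>R linepath x y t) \<le> m"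
      using \<open>0 < m\<close> norm_linepath_le[of t] assms by (simp add: mult_left_le)
    ultimately show ?thesis using near norm_x \<open>d \<le> (1 - c) / 2\<close> by argo
  qed
  then have "(1 - c) / 2 * (t - s) \<le> m * (t - s)"
    using assms by (intro mult_right_mono) simp_all
  then have "c * ((1 - c) / 2 * (t - s)) \<le> c * (m * (t - s))"
    using c by (intro mult_left_mono) simp_all
  then have "d \<le> c * m * (t - s)" by (simp add: d_def mult_ac)
  then obtain r where "s \<le> r" "r \<le> t" "line_dist x (linepath x y r) < c"
    using shrink_near_point_to_earlier_line[OF assms(1) _ assms(3) c(1) \<open>0 < d\<close> \<open>0 < m\<close> near]
      assms(2) by auto
  moreover have "line_dist x (linepath x y s) \<le> line_dist x (linepath x y r)"
    using line_dist_linepath_mono \<open>s \<le> r\<close> \<open>r \<le> t\<close> assms by simp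
  ultimately show ?thesis by (simp add: c_def)
qed

lemma linepath_level_unique:
  assumes "0 < c" "c < 1"
  defines "T \<equiv> Inf {t \<in> {0..1}. c \<le> line_dist x (linepath x y t)}"
  shows "T \<in> {0..1}" and "line_dist x (linepath x y T) = c"
    and "\<And>t. t \<in> {0..1} \<Longrightarrow> line_dist x (linepath x y t) = c \<Longrightarrow> t = T"
proof -
  obtain \<tau> where \<tau>: "0 \<le> \<tau>" "\<tau> \<le> 1" "line_dist x (linepath x y \<tau>) = c"
    using IVT'[of "\<lambda>t. line_dist x (linepath x y t)" 0 c 1] assms
      line_dist_linepath_0 line_dist_linepath_1 continuous_on_line_dist_linepath by auto
  have below: "line_dist x (linepath x y t) < c" if "0 \<le> t" "t < \<tau>" for t
    using line_dist_linepath_strict_mono[of t \<tau>] that \<tau> assms(1,2) by simp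
  have "{t \<in> {0..1}. c \<le> line_dist x (linepath x y t)} = {\<tau>..1}"
  proof (intro set_eqI iffI)
    fix t assume "t \<in> {t \<in> {0..1}. c \<le> line_dist x (linepath x y t)}"
    then show "t \<in> {\<tau>..1}" using below[of t] by (auto simp: not_less[symmetric])
  next
    fix t assume "t \<in> {\<tau>..1}"
    then show "t \<in> {t \<in> {0..1}. c \<le> line_dist x (linepath x y t)}"
      using line_dist_linepath_mono[of \<tau> t] \<tau> by auto
  qed
  then have "T = \<tau>" using \<tau> by (simp add: T_def)
  then show "T \<in> {0..1}" "line_dist x (linepath x y T) = c" using \<tau> by simp_all
  fix t assume t: "t \<in> {0..1}" "line_dist x (linepath x y t) = c"
  have "\<not> t < \<tau>" using below[of t] t by auto
  moreover have "\<not> \<tau> < t" using line_dist_linepath_strict_mono[of \<tau> t] t \<tau> assms(1,2) by auto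
  ultimately show "t = T" using \<open>T = \<tau>\<close> by simp
qed

lemma sgn_linepath_level:
  assumes "0 < c" "c < 1"
    and "T = Inf {t \<in> {0..1}. c \<le> line_dist x (linepath x y t)}"
  shows "norm (sgn (linepath x y T)) = 1" and "line_dist x (sgn (linepath x y T)) = c"
proof -
  have T: "T \<in> {0..1}" "line_dist x (linepath x y T) = c"
    unfolding assms(3) by (fact linepath_level_unique[OF assms(1,2)])+
  then have "linepath x y T \<noteq> 0" using norm_linepath_ge[of T] by auto
  then show "norm (sgn (linepath x y T)) = 1" by (simp add: norm_sgn)
  have "sgn (linepath x y T) = inverse (norm (linepath x y T)) *\<^sub>R linepath x y T"
    by (rule sgn_div_norm)
  then show "line_dist x (sgn (linepath x y T)) = c"
    using T \<open>linepath x y T \<noteq> 0\<close> line_dist_scaleR[of "inverse (norm (linepath x y T))" x] by simp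
qed

lemma level_point_eq_sgn_linepath:
  assumes "0 < c" "c < 1"
    and T: "T = Inf {t \<in> {0..1}. c \<le> line_dist x (linepath x y t)}"
    and z: "norm z = 1" "line_dist x z = c" "z = a *\<^sub>R x + b *\<^sub>R y"
    and "0 \<le> a" "0 < b"
  shows "z = sgn (linepath x y T)"
proof -
  define t where "t = b / (a + b)"
  have "0 < a + b" using assms by simp
  then have t: "t \<in> {0..1}" using assms by (simp add: t_def)
  have "(a + b) * (1 - t) = a" "(a + b) * t = b"
    using \<open>0 < a + b\<close> by (simp_all add: t_def field_simps)
  then have zt: "z = (a + b) *\<^sub>R linepath x y t"
    by (simp add: z(3) linepath_def scaleR_add_right)
  then have "line_dist x (linepath x y t) = c"
    using z(2) line_dist_scaleR[of "a + b" x] \<open>0 < a + b\<close> by simp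
  then have "t = T" unfolding T by (rule linepath_level_unique(3)[OF assms(1,2) t])
  have "z = sgn z" using z(1) by (simp add: sgn_div_norm)
  also have "\<dots> = sgn (linepath x y T)"
    using zt \<open>t = T\<close> \<open>0 < a + b\<close> by (simp add: sgn_scaleR)
  finally show ?thesis .
qed

lemma dim2_coordinates:
  assumes "dim (UNIV :: 'a set) = 2"
  obtains a b where "z = a *\<^sub>R x + b *\<^sub>R y"
proof -
  have x: "x \<notin> span {y}"
  proof
    assume "x \<in> span {y}"
    then obtain k where "x = k *\<^sub>R y" by (auto simp: span_singleton)
    moreover have "norm x \<le> norm (x + (- k) *\<^sub>R y)" using orth unfolding bj_orth_def by blast
    ultimately show False using norm_x by simp
  qed
  then have "x \<noteq> y" by (metis insertI1 span_base)
  have "y \<noteq> 0" using norm_y by auto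
  then have "independent {y}" by (simp add: independent_insert)
  with x have indep: "independent {x, y}" by (simp add: independent_insert)
  have "z \<in> span {x, y}"
  proof (rule ccontr)
    assume z: "z \<notin> span {x, y}"
    then have "z \<noteq> x" "z \<noteq> y" by (metis insertI1 insertI2 span_base)+
    with z indep \<open>x \<noteq> y\<close> have zxy: "independent {z, x, y}" "card {z, x, y} = 3"
      by (simp_all add: independent_insert)
    obtain B :: "'a set" where B: "independent B" "UNIV \<subseteq> span B" "card B = dim (UNIV :: 'a set)"
      using real_vector.basis_exists by blast
    then have "finite B" "card B = 2" using assms by (simp_all add: card_ge_0_finite)
    moreover have "{z, x, y} \<subseteq> span B" using B(2) by blast
    ultimately show False
      using real_vector.independent_span_bound[OF \<open>finite B\<close> zxy(1)] zxy(2) by simp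
  qed
  then obtain a where "z - a *\<^sub>R x \<in> span {y}" by (auto simp: span_insert)
  then obtain b where "z - a *\<^sub>R x = b *\<^sub>R y" by (auto simp: span_singleton)
  then show ?thesis using that[of a b] by (simp add: algebra_simps)
qed

lemma level_point_upper_half:
  assumes "0 < c" "c < 1"
    and T1: "T1 = Inf {t \<in> {0..1}. c \<le> line_dist x (linepath x y t)}"
    and T2: "T2 = Inf {t \<in> {0..1}. c \<le> line_dist (- x) (linepath (- x) y t)}"
    and z: "norm z = 1" "line_dist x z = c" "z = a *\<^sub>R x + b *\<^sub>R y" and "0 < b"
  shows "z = sgn (linepath x y T1) \<or> z = sgn (linepath (- x) y T2)"
proof (cases "0 \<le> a")
  case True
  then show ?thesis using level_point_eq_sgn_linepath[OF assms(1,2) T1 z] \<open>0 < b\<close> by simp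
next
  case False
  interpret neg: bj_unit_pair "- x" y by (rule bj_unit_pair_uminus)
  have "z = (- a) *\<^sub>R (- x) + b *\<^sub>R y" using z(3) by simp
  moreover have "line_dist (- x) z = c" using z(2) by (simp add: line_dist_uminus_left)
  ultimately show ?thesis
    using neg.level_point_eq_sgn_linepath[OF assms(1,2) T2 z(1), of "- a" b] False \<open>0 < b\<close>
    by simp
qed

theorem unit_level_set_line_dist_dim2:
  assumes dim2: "dim (UNIV :: 'a set) = 2" and c: "0 < c" "c < 1"
    and T1: "T1 = Inf {t \<in> {0..1}. c \<le> line_dist x (linepath x y t)}"
    and T2: "T2 = Inf {t \<in> {0..1}. c \<le> line_dist (- x) (linepath (- x) y t)}"
  shows "{z. norm z = 1 \<and> line_dist x z = c}
    = {sgn (linepath x y T1), - sgn (linepath x y T1),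
       sgn (linepath (- x) y T2), - sgn (linepath (- x) y T2)}"
    (is "?L = {?v1, - ?v1, ?v2, - ?v2}")
proof (intro equalityI subsetI)
  fix z assume "z \<in> ?L"
  then have z: "norm z = 1" "line_dist x z = c" by simp_all
  obtain a b where ab: "z = a *\<^sub>R x + b *\<^sub>R y" using dim2_coordinates[OF dim2] .
  have "b \<noteq> 0"
  proof
    assume "b = 0"
    then have "a \<noteq> 0" "z = a *\<^sub>R x" using z(1) ab by auto
    then have "line_dist x z = 0" using line_dist_scaleR line_dist_self by metis
    then show False using z c by simp
  qed
  then consider "0 < b" | "0 < - b" by linarith
  then show "z \<in> {?v1, - ?v1, ?v2, - ?v2}"
  proof cases
    case 1
    then show ?thesis using level_point_upper_half[OF c T1 T2 z ab] by auto
  next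
    case 2
    have "norm (- z) = 1" "line_dist x (- z) = c"
      using z by (simp_all add: line_dist_uminus_right)
    moreover have "- z = (- a) *\<^sub>R x + (- b) *\<^sub>R y" using ab by simp
    ultimately have "- z = ?v1 \<or> - z = ?v2"
      using level_point_upper_half[OF c T1 T2] 2 by blast
    then show ?thesis by (metis insert_iff minus_minus)
  qed
next
  interpret neg: bj_unit_pair "- x" y by (rule bj_unit_pair_uminus)
  fix z assume "z \<in> {?v1, - ?v1, ?v2, - ?v2}"
  moreover have "norm ?v1 = 1" "line_dist x ?v1 = c"
    using sgn_linepath_level[OF c T1] by simp_all
  moreover have "norm ?v2 = 1" "line_dist x ?v2 = c"
    using neg.sgn_linepath_level[OF c T2] by (simp_all add: line_dist_uminus_left)
  ultimately show "z \<in> ?L" by (auto simp: line_dist_uminus_right)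
qed

end

theorem theorem2p2:
  fixes x y :: "'a::banach" and \<epsilon> t1 t2 :: real and u1 u2 v1 v2 :: 'a
  assumes dim2: "dim (UNIV :: 'a set) = 2"
    and x1: "norm x = 1" and y1: "norm y = 1"
    and eps: "0 \<le> \<epsilon>" "\<epsilon> < 1"
    and bj: "bj_orth x y"
    and t1: "t1 = Inf {t \<in> {0..1}. dorth \<epsilon> x ((1 - t) *\<^sub>R x + t *\<^sub>R y)}"
    and t2: "t2 = Inf {t \<in> {0..1}. dorth \<epsilon> x (- ((1 - t) *\<^sub>R x) + t *\<^sub>R y)}"
    and u1: "u1 = (1 - t1) *\<^sub>R x + t1 *\<^sub>R y"
    and u2: "u2 = - ((1 - t2) *\<^sub>R x) + t2 *\<^sub>R y"
    and v1: "v1 = u1 /\<^sub>R norm u1"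
    and v2: "v2 = u2 /\<^sub>R norm u2"
  shows "(0 < \<epsilon> \<longrightarrow> S_set x \<epsilon> = {v1, -v1, v2, -v2})
       \<and> (\<epsilon> = 0 \<longrightarrow> S_set x \<epsilon> = {y'. norm y' = 1 \<and> bj_orth x y'})"
proof -
  interpret bj_unit_pair x y using x1 y1 bj by unfold_locales
  define c where "c = sqrt (1 - \<epsilon>\<^sup>2)"
  have S: "S_set x \<epsilon> = {z. norm z = 1 \<and> line_dist x z = c}"
    by (simp add: S_set_def line_dist_def c_def)
  show ?thesis
  proof (intro conjI impI)
    assume "0 < \<epsilon>"
    with eps have "0 < \<epsilon>\<^sup>2" "\<epsilon>\<^sup>2 < 1" by (simp_all add: power_less_one_iff)
    then have c: "0 < c" "c < 1" by (simp_all add: c_def)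
    have "t1 = Inf {t \<in> {0..1}. c \<le> line_dist x (linepath x y t)}"
      using t1 x1 by (simp add: dorth_iff_line_dist linepath_def c_def)
    moreover have "t2 = Inf {t \<in> {0..1}. c \<le> line_dist (- x) (linepath (- x) y t)}"
      using t2 x1 by (simp add: dorth_iff_line_dist linepath_def c_def line_dist_uminus_left)
    moreover have "v1 = sgn (linepath x y t1)" "v2 = sgn (linepath (- x) y t2)"
      using u1 v1 u2 v2 by (simp_all add: sgn_div_norm linepath_def)
    ultimately show "S_set x \<epsilon> = {v1, - v1, v2, - v2}"
      using unit_level_set_line_dist_dim2[OF dim2 c] S by simp
  next
    assume "\<epsilon> = 0"
    then show "S_set x \<epsilon> = {y'. norm y' = 1 \<and> bj_orth x y'}"
      using S x1 by (simp add: c_def bj_orth_iff_line_dist)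
  qed
qed

end
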